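(* Let $\Gamma\{-\}$ be a unary context and $A$ a formula. If both $\Gamma\{A\}$ and $\Gamma\{A^\perp\}$ are cut-free provable, then $\Gamma\{\}$ is cut-free provable.
   Context: Fix a countable set of atoms; each atom $\alpha$ has a dual negative atom $\alpha^\perp$. Formulas: $A,B ::= \alpha \mid \alpha^\perp \mid A\land B \mid A\lor B \mid \Box A \mid \Diamond A$. Negation $A^\perp$: $(\alpha)^\perp=\alpha^\perp$, $(\alpha^\perp)^\perp=\alpha$, $(A\land B)^\perp=A^\perp\lor B^\perp$, $(A\lor B)^\perp=A^\perp\land B^\perp$, $(\Box A)^\perp=\Diamond A^\perp$, $(\Diamond A)^\perp=\Box A^\perp$. A (nested) sequent is given by $\Gamma,\Delta ::= \cdot \mid \Gamma, A \mid \Gamma, [\Delta]$, where $\cdot$ is the empty sequent; sequents are taken up to exchange, and $\Gamma,\Delta$ denotes juxtaposition. A unary context is given by $\Gamma\{-\} ::= \Delta,\{-\} \mid \Delta,[\Gamma\{-\}]$; $\Gamma\{\Delta\}$ is the result of filling the hole with $\Delta$, and $\Gamma\{\}$ means $\Gamma\{\cdot\}$. Depth: $\mathrm{depth}(\Delta,\{-\})=0$, $\mathrm{depth}(\Delta,[\Gamma\{-\}])=\mathrm{depth}(\Gamma\{-\})+1$. Rules: (id) $\Gamma\{\alpha^\perp,\alpha\}$ with no premises ($\alpha$ an atom); ($\land$) from $\Gamma\{A\}$ and $\Gamma\{B\}$ infer $\Gamma\{A\land B\}$; ($\lor$) from $\Gamma\{A,B\}$ infer $\Gamma\{A\lor B\}$;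 ($\Box$) from $\Gamma\{[\Diamond A^\perp, A]\}$ infer $\Gamma\{\Box A\}$; ($\Diamond$) from $\Gamma\{\Delta\{A\},\Diamond A\}$ infer $\Gamma\{\Delta\{\},\Diamond A\}$, provided $\mathrm{depth}(\Delta\{-\})>0$. Cut-free provable = derivable using these rules. *)

theory Defs
  imports "HOL-Library.Multiset"
begin

datatype form =
    At nat | NAt nat
  | Conj form form | Disj form form
  | Bx form | Dia form

fun neg :: "form \<Rightarrow> form" where
  "neg (At a) = NAt a"
| "neg (NAt a) = At a"
| "neg (Conj A B) = Disj (neg A) (neg B)"
| "neg (Disj A B) = Conj (neg A) (neg B)"
| "neg (Bx A) = Dia (neg A)"
| "neg (Dia A) = Bx (neg A)"

text \<open>Nested sequents up to exchange: a sequent is a multiset of items,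
  each item a formula or a bracketed (nested) sequent.\<close>
datatype item = F form | Br "item multiset"

type_synonym sequent = "item multiset"

text \<open>Unary contexts: Hole D is  D,{-};  Nest D G is  D,[G{-}].\<close>
datatype ctx = Hole sequent | Nest sequent ctx

fun fill :: "ctx \<Rightarrow> sequent \<Rightarrow> sequent" where
  "fill (Hole D) X = D + X"
| "fill (Nest D G) X = D + {# Br (fill G X) #}"

fun depth :: "ctx \<Rightarrow> nat" where
  "depth (Hole D) = 0"
| "depth (Nest D G) = Suc (depth G)"

inductive prov :: "sequent \<Rightarrow> bool" where
  ax: "prov (fill G {# F (NAt a), F (At a) #})"
| conjR: "prov (fill G {# F A #}) \<Longrightarrow> prov (fill G {# F B #}) \<Longrightarrow> prov (fill G {# F (Conj A B) #})"
| disjR: "prov (fill G {# F A, F B #}) \<Longrightarrow> prov (fill G {# F (Disj A B) #})"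
| boxR: "prov (fill G {# Br {# F (Dia (neg A)), F A #} #}) \<Longrightarrow> prov (fill G {# F (Bx A) #})"
| diaR: "depth D > 0 \<Longrightarrow> prov (fill G (fill D {# F A #} + {# F (Dia A) #}))
          \<Longrightarrow> prov (fill G (fill D {#} + {# F (Dia A) #}))"

end

theory Submission
  imports Defs
begin

(* Cut is admissible because the cut-free calculus is sound and complete for one class of
  models: finite trees with the strict descendant relation, i.e. the transitive, conversely
  well-founded frames of GL, to which the Loeb-style box rule belongs. A bracket is read as
  "some descendant falsifies its content".

  Completeness is proof search inside the finite Fischer-Ladner closure of the sequent: a
  failed search yields a tree falsifying it. The search terminates because a box step is
  only needed when its new diamond (Dia (neg A)) is not yet visible on the path to the root
  (otherwise the sequent is provable outright), so the set of visible diamonds grows.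

  If Gamma{} were unprovable, some tree would falsify it; the node sitting at the hole
  falsifies A or neg A, so the tree falsifies Gamma{A} or Gamma{neg A}, contradicting
  soundness. *)

lemma size_multiset_mem_less: "x \<in># M \<Longrightarrow> f x < size_multiset f M"
  by (subst insert_DiffM[symmetric]) (simp_all only: size_multiset_add_mset, simp)

datatype tree = Node (atoms: "nat set") "tree list"

fun desc :: "tree \<Rightarrow> tree set" where
  "desc (Node P ks) = (\<Union>k\<in>set ks. insert k (desc k))"

lemma desc_trans: "s \<in> desc t \<Longrightarrow> u \<in> desc s \<Longrightarrow> u \<in> desc t"
  by (induction t rule: desc.induct) auto

lemma size_desc_less: "s \<in> desc t \<Longrightarrow> size s < size t"
proof (induction t rule: desc.induct)
  case (1 P ks)
  then obtain k where k: "k \<in> set ks" "s = k \<or> s \<in> desc k" by auto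
  then have "size k < size (Node P ks)" by (simp add: le_imp_less_Suc size_list_estimation')
  with k 1 show ?case by (metis less_trans)
qed

primrec sat :: "tree \<Rightarrow> form \<Rightarrow> bool" where
  "sat t (At p) = (p \<in> atoms t)"
| "sat t (NAt p) = (p \<notin> atoms t)"
| "sat t (Conj A B) = (sat t A \<and> sat t B)"
| "sat t (Disj A B) = (sat t A \<or> sat t B)"
| "sat t (Bx A) = (\<forall>s\<in>desc t. sat s A)"
| "sat t (Dia A) = (\<exists>s\<in>desc t. sat s A)"

lemma sat_neg [simp]: "sat t (neg A) \<longleftrightarrow> \<not> sat t A"
  by (induction A arbitrary: t) auto

lemma neg_neg [simp]: "neg (neg A) = A"
  by (induction A) auto

function falsifies_item :: "tree \<Rightarrow> item \<Rightarrow> bool" where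
  "falsifies_item t (F A) \<longleftrightarrow> \<not> sat t A"
| "falsifies_item t (Br M) \<longleftrightarrow> (\<exists>s\<in>desc t. \<forall>x\<in>#M. falsifies_item s x)"
  by pat_completeness auto
termination
  by (relation "measure (\<lambda>(t, x). size x)") (auto intro: less_SucI size_multiset_mem_less)

definition falsifies :: "tree \<Rightarrow> sequent \<Rightarrow> bool" where
  "falsifies t S \<longleftrightarrow> (\<forall>x\<in>#S. falsifies_item t x)"

lemma falsifies_item_Br [simp]: "falsifies_item t (Br M) \<longleftrightarrow> (\<exists>s\<in>desc t. falsifies s M)"
  by (simp add: falsifies_def)

declare falsifies_item.simps(2) [simp del]

lemma falsifies_empty [simp]: "falsifies t {#}"
  by (simp add: falsifies_def)

lemma falsifies_add_mset [simp]: "falsifies t (add_mset x S) \<longleftrightarrow> falsifies_item t x \<and> falsifies t S"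
  by (auto simp: falsifies_def)

lemma falsifies_union [simp]: "falsifies t (S + S') \<longleftrightarrow> falsifies t S \<and> falsifies t S'"
  by (auto simp: falsifies_def)

lemma falsifies_fill_point:
  "falsifies t (fill G X) \<Longrightarrow> \<exists>s. (if depth G = 0 then s = t else s \<in> desc t) \<and> falsifies s X
     \<and> (\<forall>Y. falsifies s Y \<longrightarrow> falsifies t (fill G Y))"
proof (induction G arbitrary: t)
  case (Hole D)
  then show ?case by auto
next
  case (Nest D G)
  then obtain u where u: "u \<in> desc t" "falsifies u (fill G X)" "falsifies t D" by auto
  with Nest.IH obtain s where s: "if depth G = 0 then s = u else s \<in> desc u" "falsifies s X"
    "\<forall>Y. falsifies s Y \<longrightarrow> falsifies u (fill G Y)" by blast
  from s(1) u(1) have "s \<in> desc t" by (auto split: if_splits intro: desc_trans)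
  with s(2,3) u show ?case by auto
qed

lemma deepest_failure:
  "\<not> sat u A \<Longrightarrow> \<exists>w. (w = u \<or> w \<in> desc u) \<and> \<not> sat w A \<and> \<not> sat w (Dia (neg A))"
proof (induction u rule: measure_induct_rule[of size])
  case (less u)
  show ?case
  proof (cases "sat u (Dia (neg A))")
    case True
    then obtain v where v: "v \<in> desc u" "\<not> sat v A" by auto
    with less.IH[OF size_desc_less] obtain w
      where "(w = v \<or> w \<in> desc v) \<and> \<not> sat w A \<and> \<not> sat w (Dia (neg A))" by blast
    with v(1) show ?thesis by (auto intro: desc_trans)
  qed (use less.prems in blast)
qed

lemma prov_sound: "prov S \<Longrightarrow> \<not> falsifies t S"
proof (induction arbitrary: t rule: prov.induct)
  case (ax G a)
  show ?case
    using falsifies_fill_point[of t G "{#F (NAt a), F (At a)#}"] by auto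
next
  case (conjR G A B)
  show ?case
  proof
    assume "falsifies t (fill G {#F (Conj A B)#})"
    then obtain s where "falsifies s {#F A#} \<or> falsifies s {#F B#}"
      "\<forall>Y. falsifies s Y \<longrightarrow> falsifies t (fill G Y)"
      using falsifies_fill_point by fastforce
    with conjR.IH show False by blast
  qed
next
  case (disjR G A B)
  show ?case
  proof
    assume "falsifies t (fill G {#F (Disj A B)#})"
    then obtain s where "falsifies s {#F A, F B#}"
      "\<forall>Y. falsifies s Y \<longrightarrow> falsifies t (fill G Y)"
      using falsifies_fill_point by fastforce
    with disjR.IH show False by blast
  qed
next
  case (boxR G A)
  show ?case
  proof
    assume "falsifies t (fill G {#F (Bx A)#})"
    then obtain s where s: "falsifies s {#F (Bx A)#}" "\<forall>Y. falsifies s Y \<longrightarrow> falsifies t (fill G Y)"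
      using falsifies_fill_point by blast
    then obtain u where "u \<in> desc s" "\<not> sat u A" by auto
    with deepest_failure obtain w where "w \<in> desc s" "\<not> sat w A" "\<not> sat w (Dia (neg A))"
      by (metis desc_trans)
    then have "falsifies s {#Br {#F (Dia (neg A)), F A#}#}" by auto
    with s(2) boxR.IH show False by blast
  qed
next
  case (diaR D G A)
  show ?case
  proof
    assume "falsifies t (fill G (fill D {#} + {#F (Dia A)#}))"
    then obtain s where s: "falsifies s (fill D {#})" "\<not> sat s (Dia A)"
      "\<forall>Y. falsifies s Y \<longrightarrow> falsifies t (fill G Y)"
      using falsifies_fill_point by fastforce
    from falsifies_fill_point[OF s(1)] \<open>depth D > 0\<close> obtain u where
      "u \<in> desc s" "\<forall>Y. falsifies u Y \<longrightarrow> falsifies s (fill D Y)" by auto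
    with s(2) have "falsifies s (fill D {#F A#} + {#F (Dia A)#})" by auto
    with s(3) diaR.IH show False by blast
  qed
qed

fun ctx_comp :: "ctx \<Rightarrow> ctx \<Rightarrow> ctx" where
  "ctx_comp (Hole D) (Hole E) = Hole (D + E)"
| "ctx_comp (Hole D) (Nest E H) = Nest (D + E) H"
| "ctx_comp (Nest D G) H = Nest D (ctx_comp G H)"

lemma fill_ctx_comp [simp]: "fill (ctx_comp G H) X = fill G (fill H X)"
  by (induction G H rule: ctx_comp.induct) (auto simp: ac_simps)

lemma depth_ctx_comp [simp]: "depth (ctx_comp G H) = depth G + depth H"
  by (induction G H rule: ctx_comp.induct) auto

lemma prov_ax_in: "prov (fill G (add_mset (F (NAt a)) (add_mset (F (At a)) Z)))"
  using prov.ax[of "ctx_comp G (Hole Z)" a] by simp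

lemma prov_conj_in:
  "prov (fill G (add_mset (F A) Z)) \<Longrightarrow> prov (fill G (add_mset (F B) Z))
    \<Longrightarrow> prov (fill G (add_mset (F (Conj A B)) Z))"
  using prov.conjR[of "ctx_comp G (Hole Z)" A B] by simp

lemma prov_disj_in:
  "prov (fill G (add_mset (F A) (add_mset (F B) Z))) \<Longrightarrow> prov (fill G (add_mset (F (Disj A B)) Z))"
  using prov.disjR[of "ctx_comp G (Hole Z)" A B] by simp

lemma prov_box_in:
  "prov (fill G (add_mset (Br {#F (Dia (neg A)), F A#}) Z)) \<Longrightarrow> prov (fill G (add_mset (F (Bx A)) Z))"
  using prov.boxR[of "ctx_comp G (Hole Z)" A] by simp

lemma prov_identity: "prov (fill G (add_mset (F B) (add_mset (F (neg B)) Z)))"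
proof (induction B arbitrary: G Z)
  case (At a)
  show ?case using prov_ax_in[of G a Z] by (simp add: add_mset_commute)
next
  case (NAt a)
  show ?case using prov_ax_in[of G a Z] by simp
next
  case (Conj B C)
  have "prov (fill G (add_mset (F B) (add_mset (F (neg B)) (add_mset (F (neg C)) Z))))"
    by (rule Conj.IH(1))
  moreover have "prov (fill G (add_mset (F C) (add_mset (F (neg B)) (add_mset (F (neg C)) Z))))"
    using Conj.IH(2)[of G "add_mset (F (neg B)) Z"] by (simp add: add_mset_commute)
  ultimately have "prov (fill G (add_mset (F (Conj B C)) (add_mset (F (neg B)) (add_mset (F (neg C)) Z))))"
    by (rule prov_conj_in)
  then have "prov (fill G (add_mset (F (Disj (neg B) (neg C))) (add_mset (F (Conj B C)) Z)))"
    by (intro prov_disj_in) (simp add: add_mset_commute)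
  then show ?case by (simp add: add_mset_commute)
next
  case (Disj B C)
  have "prov (fill G (add_mset (F (neg B)) (add_mset (F B) (add_mset (F C) Z))))"
    using Disj.IH(1)[of G "add_mset (F C) Z"] by (simp add: add_mset_commute)
  moreover have "prov (fill G (add_mset (F (neg C)) (add_mset (F B) (add_mset (F C) Z))))"
    using Disj.IH(2)[of G "add_mset (F B) Z"] by (simp add: add_mset_commute)
  ultimately have "prov (fill G (add_mset (F (Conj (neg B) (neg C))) (add_mset (F B) (add_mset (F C) Z))))"
    by (rule prov_conj_in)
  then show ?case
    by (intro prov_disj_in) (simp add: add_mset_commute)
next
  case (Bx B)
  let ?D = "Nest Z (Hole {#F (Dia (neg B)), F B#})"
  have "prov (fill G (fill ?D {#F (neg B)#} + {#F (Dia (neg B))#}))"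
    using Bx.IH[of "ctx_comp G (Nest (add_mset (F (Dia (neg B))) Z) (Hole {#}))" "{#F (Dia (neg B))#}"]
    by (simp add: add_mset_commute ac_simps)
  then have "prov (fill G (fill ?D {#} + {#F (Dia (neg B))#}))"
    by (rule prov.diaR[rotated]) simp
  then show ?case
    by (intro prov_box_in) (simp add: add_mset_commute)
next
  case (Dia B)
  let ?D = "Nest Z (Hole {#F (Dia B), F (neg B)#})"
  have "prov (fill G (fill ?D {#F B#} + {#F (Dia B)#}))"
    using Dia.IH[of "ctx_comp G (Nest (add_mset (F (Dia B)) Z) (Hole {#}))" "{#F (Dia B)#}"]
    by (simp add: add_mset_commute ac_simps)
  then have "prov (fill G (fill ?D {#} + {#F (Dia B)#}))"
    by (rule prov.diaR[rotated]) simp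
  then show ?case
    using prov_box_in[of G "neg B" "add_mset (F (Dia B)) Z"] by (simp add: add_mset_commute)
qed

fun hole_seq :: "ctx \<Rightarrow> sequent" where
  "hole_seq (Hole D) = D"
| "hole_seq (Nest D G) = hole_seq G"

definition dias :: "sequent \<Rightarrow> form set" where
  "dias X = {A. F (Dia A) \<in># X}"

fun ancestor_dias :: "ctx \<Rightarrow> form set" where
  "ancestor_dias (Hole D) = {}"
| "ancestor_dias (Nest D G) = dias D \<union> ancestor_dias G"

lemma dias_union [simp]: "dias (X + Y) = dias X \<union> dias Y"
  by (auto simp: dias_def)

lemma dias_add_mset [simp]:
  "dias (add_mset (F (Dia A)) X) = insert A (dias X)"
  "(\<And>B. x \<noteq> F (Dia B)) \<Longrightarrow> dias (add_mset x X) = dias X"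
  by (auto simp: dias_def)

lemma hole_seq_ctx_comp_Nest [simp]: "hole_seq (ctx_comp G (Nest E H)) = hole_seq H"
  by (induction G) auto

lemma ancestor_dias_ctx_comp_Nest [simp]:
  "ancestor_dias (ctx_comp G (Nest E H)) = ancestor_dias G \<union> dias (hole_seq G + E) \<union> ancestor_dias H"
  by (induction G) auto

lemma ancestor_dia_split:
  "A \<in> ancestor_dias G \<Longrightarrow>
    \<exists>G' D. 0 < depth D \<and> (\<forall>Z. fill G Z = fill G' (fill D Z + {#F (Dia A)#}))"
proof (induction G)
  case (Nest D G)
  show ?case
  proof (cases "A \<in> dias D")
    case True
    then have "\<forall>Z. fill (Nest D G) Z = fill (Hole (D - {#F (Dia A)#})) (fill (Nest {#} G) Z + {#F (Dia A)#})"
      by (simp add: dias_def)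
    then show ?thesis by (metis depth.simps(2) zero_less_Suc)
  next
    case False
    with Nest obtain G' D' where "0 < depth D'" "\<forall>Z. fill G Z = fill G' (fill D' Z + {#F (Dia A)#})"
      by auto
    then have "0 < depth D'" "\<forall>Z. fill (Nest D G) Z = fill (Nest D G') (fill D' Z + {#F (Dia A)#})"
      by simp_all
    then show ?thesis by blast
  qed
qed simp

lemma prov_drop_ancestor_dia:
  assumes "A \<in> ancestor_dias G" and "prov (fill G (add_mset (F A) X))"
  shows "prov (fill G X)"
proof -
  from ancestor_dia_split[OF assms(1)] obtain G' D
    where D: "0 < depth D" "\<forall>Z. fill G Z = fill G' (fill D Z + {#F (Dia A)#})" by blast
  let ?D = "ctx_comp D (Hole X)"
  have "prov (fill G' (fill ?D {#F A#} + {#F (Dia A)#}))"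
    using assms(2) D(2) by (simp add: ac_simps)
  then have "prov (fill G' (fill ?D {#} + {#F (Dia A)#}))"
    by (rule prov.diaR[rotated]) (simp add: D(1))
  with D(2) show ?thesis by simp
qed

(* Inside the bracket opened by the box rule, neg A can be added by the diamond rule,
  and then the identity closes the bracket. *)
lemma prov_box_loop:
  assumes "F (Bx A) \<in># X" and "neg A \<in> ancestor_dias G \<union> dias X"
  shows "prov (fill G X)"
proof -
  define X' where "X' = X - {#F (Bx A)#}"
  have X: "X = add_mset (F (Bx A)) X'" using assms(1) by (simp add: X'_def)
  let ?K = "{#F (Dia (neg A)), F A#}"
  let ?G = "ctx_comp G (Nest X' (Hole ?K))"
  have "neg A \<in> ancestor_dias ?G" using assms(2) X by auto
  moreover have "prov (fill ?G {#F (neg A)#})"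
    using prov_identity[of "ctx_comp G (Nest X' (Hole {#}))" A "{#F (Dia (neg A))#}"]
    by (simp add: add_mset_commute ac_simps)
  ultimately have "prov (fill ?G {#})" by (rule prov_drop_ancestor_dia)
  then show ?thesis
    using prov_box_in[of G A X'] X by (simp add: ac_simps)
qed

primrec subforms :: "form \<Rightarrow> form set" where
  "subforms (At a) = {At a}"
| "subforms (NAt a) = {NAt a}"
| "subforms (Conj A B) = insert (Conj A B) (subforms A \<union> subforms B)"
| "subforms (Disj A B) = insert (Disj A B) (subforms A \<union> subforms B)"
| "subforms (Bx A) = insert (Bx A) (subforms A)"
| "subforms (Dia A) = insert (Dia A) (subforms A)"

lemma subforms_refl: "A \<in> subforms A"
  by (cases A) auto

lemma subforms_trans: "B \<in> subforms A \<Longrightarrow> subforms B \<subseteq> subforms A"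
  by (induction A) auto

lemma finite_subforms: "finite (subforms A)"
  by (induction A) auto

lemma subforms_components:
  "Conj X Y \<in> subforms A \<Longrightarrow> X \<in> subforms A \<and> Y \<in> subforms A"
  "Disj X Y \<in> subforms A \<Longrightarrow> X \<in> subforms A \<and> Y \<in> subforms A"
  "Bx X \<in> subforms A \<Longrightarrow> X \<in> subforms A"
  "Dia X \<in> subforms A \<Longrightarrow> X \<in> subforms A"
  using subforms_trans subforms_refl by fastforce+

definition fl_closed :: "form set \<Rightarrow> bool" where
  "fl_closed C \<longleftrightarrow> (\<forall>A B.
     (Conj A B \<in> C \<longrightarrow> A \<in> C \<and> B \<in> C) \<and> (Disj A B \<in> C \<longrightarrow> A \<in> C \<and> B \<in> C) \<and>
     (Bx A \<in> C \<longrightarrow> A \<in> C \<and> Dia (neg A) \<in> C) \<and> (Dia A \<in> C \<longrightarrow> A \<in> C))"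

lemma fl_closedD:
  assumes "fl_closed C"
  shows "Conj A B \<in> C \<Longrightarrow> A \<in> C" "Conj A B \<in> C \<Longrightarrow> B \<in> C"
    "Disj A B \<in> C \<Longrightarrow> A \<in> C" "Disj A B \<in> C \<Longrightarrow> B \<in> C"
    "Bx A \<in> C \<Longrightarrow> A \<in> C" "Bx A \<in> C \<Longrightarrow> Dia (neg A) \<in> C" "Dia A \<in> C \<Longrightarrow> A \<in> C"
  using assms unfolding fl_closed_def by blast+

lemma fl_closed_UN: "(\<And>i. i \<in> I \<Longrightarrow> fl_closed (C i)) \<Longrightarrow> fl_closed (\<Union>i\<in>I. C i)"
  unfolding fl_closed_def by blast

definition fl_closure :: "form \<Rightarrow> form set" where
  "fl_closure A = subforms A \<union> neg ` subforms A \<union> (\<lambda>B. Dia (neg B)) ` subforms A"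

lemma finite_fl_closure: "finite (fl_closure A)"
  by (simp add: fl_closure_def finite_subforms)

lemma fl_closure_refl: "A \<in> fl_closure A"
  by (simp add: fl_closure_def subforms_refl)

lemma fl_closed_fl_closure: "fl_closed (fl_closure A)"
proof -
  have neg_img: "B \<in> neg ` S \<longleftrightarrow> neg B \<in> S" for B S
    by (metis image_iff neg_neg)
  show ?thesis
    unfolding fl_closed_def fl_closure_def
    by (auto simp: neg_img dest: subforms_components)
qed

function forms_item :: "item \<Rightarrow> form set" where
  "forms_item (F A) = {A}"
| "forms_item (Br M) = (\<Union>x\<in>set_mset M. forms_item x)"
  by pat_completeness auto
termination
  by (relation "measure size") (auto intro: less_SucI size_multiset_mem_less)

definition forms :: "sequent \<Rightarrow> form set" where
  "forms S = (\<Union>x\<in>set_mset S. forms_item x)"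

lemma forms_simps [simp]:
  "forms {#} = {}"
  "forms (add_mset x S) = forms_item x \<union> forms S"
  "forms (S + S') = forms S \<union> forms S'"
  by (auto simp: forms_def)

lemma forms_item_Br [simp]: "forms_item (Br M) = forms M"
  by (simp add: forms_def)

declare forms_item.simps(2) [simp del]

lemma finite_forms: "finite (forms S)"
proof -
  have "finite (forms_item x)" for x
    by (induction x rule: forms_item.induct) (auto simp: forms_def)
  then show ?thesis by (simp add: forms_def)
qed

lemma forms_fill: "forms (fill G X) = forms (fill G {#}) \<union> forms X"
  by (induction G) auto

lemma ancestor_dias_forms: "A \<in> ancestor_dias G \<Longrightarrow> Dia A \<in> forms (fill G {#})"
  by (induction G) (force simp: dias_def forms_def)+

lemma finite_mset_preimage: "inj h \<Longrightarrow> finite {y. h y \<in># X}"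
  using finite_vimageI[of "set_mset X" h] by (simp add: vimage_def)

lemma tree_countermodel:
  assumes dias_H: "dias X \<subseteq> H"
    and no_conj: "\<And>A B. F (Conj A B) \<notin># X" and no_disj: "\<And>A B. F (Disj A B) \<notin># X"
    and no_clash: "\<And>p. F (At p) \<in># X \<Longrightarrow> F (NAt p) \<notin># X"
    and brackets: "\<And>Y. Br Y \<in># X \<Longrightarrow> \<exists>t. falsifies t Y \<and> (\<forall>A\<in>H. \<not> sat t A \<and> \<not> sat t (Dia A))"
    and boxes: "\<And>A. F (Bx A) \<in># X \<Longrightarrow> \<exists>t. \<not> sat t A \<and> (\<forall>B\<in>H. \<not> sat t B \<and> \<not> sat t (Dia B))"
  shows "\<exists>t. falsifies t X \<and> (\<forall>A\<in>H. \<not> sat t (Dia A))"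
proof -
  obtain f where f: "\<And>Y. Br Y \<in># X \<Longrightarrow>
      falsifies (f Y) Y \<and> (\<forall>A\<in>H. \<not> sat (f Y) A \<and> \<not> sat (f Y) (Dia A))"
    using brackets by metis
  obtain g where g: "\<And>A. F (Bx A) \<in># X \<Longrightarrow>
      \<not> sat (g A) A \<and> (\<forall>B\<in>H. \<not> sat (g A) B \<and> \<not> sat (g A) (Dia B))"
    using boxes by metis
  let ?K = "f ` {Y. Br Y \<in># X} \<union> g ` {A. F (Bx A) \<in># X}"
  have "finite ?K"
    by (simp add: finite_mset_preimage inj_def)
  from finite_list[OF this] obtain ks where ks: "set ks = ?K" ..
  define t where "t = Node {p. F (NAt p) \<in># X} ks"
  have desc_t: "desc t = (\<Union>k\<in>?K. insert k (desc k))"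
    unfolding t_def by (simp only: desc.simps ks)
  have H_below: "\<forall>A\<in>H. \<not> sat t (Dia A)"
  proof (intro ballI notI)
    fix A assume "A \<in> H" "sat t (Dia A)"
    then obtain k where "k \<in> ?K" "sat k A \<or> sat k (Dia A)"
      using desc_t by auto
    with \<open>A \<in> H\<close> f g show False by blast
  qed
  have "falsifies_item t x" if x: "x \<in># X" for x
  proof (cases x)
    case (F B)
    with x show ?thesis
    proof (cases B)
      case (At p)
      with F x no_clash show ?thesis by (simp add: t_def)
    next
      case (Bx A)
      with F x g desc_t show ?thesis by auto
    next
      case (Dia A)
      with F x dias_H H_below show ?thesis by (auto simp: dias_def)
    qed (use F x no_conj no_disj t_def in auto)
  next
    case (Br Y)
    with x f desc_t show ?thesis by auto
  qed
  with H_below show ?thesis by (auto simp: falsifies_def)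
qed

function item_brackets :: "item \<Rightarrow> nat" where
  "item_brackets (F A) = 0"
| "item_brackets (Br M) = Suc (\<Sum>x\<in>#M. item_brackets x)"
  by pat_completeness auto
termination
  by (relation "measure size") (auto intro: less_SucI size_multiset_mem_less)

definition brackets :: "sequent \<Rightarrow> nat" where
  "brackets X = (\<Sum>x\<in>#X. item_brackets x)"

definition weight :: "sequent \<Rightarrow> nat" where
  "weight X = (\<Sum>x\<in>#X. case x of F A \<Rightarrow> size A | Br _ \<Rightarrow> 0)"

lemma brackets_add_mset [simp]: "brackets (add_mset x X) = item_brackets x + brackets X"
  by (simp add: brackets_def)

lemma weight_add_mset [simp]: "weight (add_mset x X) = (case x of F A \<Rightarrow> size A | Br _ \<Rightarrow> 0) + weight X"
  by (simp add: weight_def)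

definition countermodel :: "ctx \<Rightarrow> sequent \<Rightarrow> form set \<Rightarrow> tree \<Rightarrow> bool" where
  "countermodel G X T t \<longleftrightarrow>
     falsifies t X \<and> (\<forall>A\<in>T. \<not> sat t A) \<and> (\<forall>A\<in>ancestor_dias G. \<not> sat t (Dia A))"

(* A search state: the hole of G is the current node and X its sequent. Each Dia A above
  the hole obliges A to fail at the current node and below; T holds those A not yet
  added to X. *)
definition has_countermodel :: "form set \<Rightarrow> ctx \<Rightarrow> sequent \<Rightarrow> form set \<Rightarrow> bool" where
  "has_countermodel C G X T \<longleftrightarrow>
     (hole_seq G = {#} \<and> forms (fill G X) \<subseteq> C \<and> T \<subseteq> ancestor_dias G \<and> \<not> prov (fill G X)
       \<longrightarrow> (\<exists>t. countermodel G X T t))"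

definition search_measure :: "form set \<Rightarrow> (ctx \<times> sequent \<times> form set \<Rightarrow> nat) list" where
  "search_measure C =
     [\<lambda>(G, X, T). card (C - (ancestor_dias G \<union> dias X)), \<lambda>(G, X, T). brackets X,
      \<lambda>(G, X, T). card T, \<lambda>(G, X, T). weight X]"

locale search_step =
  fixes C :: "form set" and G :: ctx and X :: sequent and T :: "form set"
  assumes finite_C: "finite C" and fl_closed_C: "fl_closed C"
    and hole_seq_G: "hole_seq G = {#}" and forms_C: "forms (fill G X) \<subseteq> C"
    and T_ancestor: "T \<subseteq> ancestor_dias G" and unprovable: "\<not> prov (fill G X)"
    and smaller: "\<And>G' X' T'. ((G', X', T'), (G, X, T)) \<in> measures (search_measure C)
      \<Longrightarrow> has_countermodel C G' X' T'"
begin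

lemma forms_ctx_C: "forms (fill G {#}) \<subseteq> C" and forms_X_C: "forms X \<subseteq> C"
  using forms_C unfolding forms_fill[of G X] by simp_all

lemma ancestor_dias_C: "ancestor_dias G \<subseteq> C"
proof
  fix A assume "A \<in> ancestor_dias G"
  then have "Dia A \<in> C" using forms_ctx_C by (auto dest: ancestor_dias_forms)
  with fl_closed_C show "A \<in> C" by (rule fl_closedD)
qed

lemma card_diff_mono: "S \<subseteq> S' \<Longrightarrow> card (C - S') \<le> card (C - S)"
  using finite_C by (intro card_mono) auto

lemma smaller_first:
  "card (C - (ancestor_dias G' \<union> dias X')) < card (C - (ancestor_dias G \<union> dias X))
    \<Longrightarrow> has_countermodel C G' X' T'"
  by (rule smaller) (simp add: search_measure_def)

lemma smaller_brackets:
  assumes "ancestor_dias G \<union> dias X \<subseteq> ancestor_dias G' \<union> dias X'" and "brackets X' < brackets X"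
  shows "has_countermodel C G' X' T'"
proof (rule smaller)
  have "card (C - (ancestor_dias G' \<union> dias X')) \<le> card (C - (ancestor_dias G \<union> dias X))"
    using assms(1) by (rule card_diff_mono)
  with assms(2) show "((G', X', T'), (G, X, T)) \<in> measures (search_measure C)"
    by (auto simp: search_measure_def)
qed

lemma smaller_same_level:
  assumes "dias X \<subseteq> dias X'" and "brackets X' = brackets X"
    and "card T' < card T \<or> card T' = card T \<and> weight X' < weight X"
  shows "has_countermodel C G X' T'"
proof (rule smaller)
  have "card (C - (ancestor_dias G \<union> dias X')) \<le> card (C - (ancestor_dias G \<union> dias X))"
    using assms(1) by (intro card_diff_mono) auto
  with assms(2,3) show "((G, X', T'), (G, X, T)) \<in> measures (search_measure C)"
    by (auto simp: search_measure_def)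
qed

lemma countermodel_pending:
  assumes "A \<in> T"
  shows "\<exists>t. countermodel G X T t"
proof -
  have A: "A \<in> ancestor_dias G" using assms T_ancestor by blast
  have "finite T" using T_ancestor ancestor_dias_C finite_C by (metis finite_subset)
  then have "card (T - {A}) < card T" using assms by (rule card_Diff1_less)
  then have "has_countermodel C G (add_mset (F A) X) (T - {A})"
    by (intro smaller_same_level) (auto simp: dias_def)
  moreover have "forms (fill G (add_mset (F A) X)) \<subseteq> C"
    using forms_ctx_C forms_X_C A ancestor_dias_C forms_fill[of G "add_mset (F A) X"] by auto
  moreover have "\<not> prov (fill G (add_mset (F A) X))"
    using unprovable prov_drop_ancestor_dia[OF A] by blast
  ultimately obtain t where "countermodel G (add_mset (F A) X) (T - {A}) t"
    using hole_seq_G T_ancestor by (auto simp: has_countermodel_def)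
  then have "countermodel G X T t" by (auto simp: countermodel_def)
  then show ?thesis ..
qed

lemma countermodel_reduce:
  assumes "dias X \<subseteq> dias X'" and "brackets X' = brackets X" and "weight X' < weight X"
    and "forms X' \<subseteq> C" and "\<not> prov (fill G X')" and "\<And>t. falsifies t X' \<Longrightarrow> falsifies t X"
  shows "\<exists>t. countermodel G X T t"
proof -
  have "has_countermodel C G X' T"
    using assms(1-3) by (intro smaller_same_level) auto
  moreover have "forms (fill G X') \<subseteq> C"
    using forms_ctx_C assms(4) forms_fill[of G X'] by auto
  ultimately obtain t where "countermodel G X' T t"
    using assms(5) hole_seq_G T_ancestor by (auto simp: has_countermodel_def)
  with assms(6) have "countermodel G X T t" by (auto simp: countermodel_def)
  then show ?thesis ..
qed

lemma countermodel_conj: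
  assumes "F (Conj A B) \<in># X"
  shows "\<exists>t. countermodel G X T t"
proof -
  obtain X0 where X: "X = add_mset (F (Conj A B)) X0" using assms by (metis mset_add)
  have "Conj A B \<in> C" using forms_X_C X by simp
  then have AB: "A \<in> C" "B \<in> C" using fl_closedD[OF fl_closed_C] by blast+
  obtain Y where Y: "Y = A \<or> Y = B" and unprov: "\<not> prov (fill G (add_mset (F Y) X0))"
    using unprovable prov_conj_in[of G A X0 B] X by blast
  show ?thesis
  proof (rule countermodel_reduce[OF _ _ _ _ unprov])
    show "dias X \<subseteq> dias (add_mset (F Y) X0)" "brackets (add_mset (F Y) X0) = brackets X"
      "weight (add_mset (F Y) X0) < weight X" "forms (add_mset (F Y) X0) \<subseteq> C"
      using X Y AB forms_X_C by (auto simp: dias_def)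
    show "falsifies t X" if "falsifies t (add_mset (F Y) X0)" for t
      using that X Y by auto
  qed
qed

lemma countermodel_disj:
  assumes "F (Disj A B) \<in># X"
  shows "\<exists>t. countermodel G X T t"
proof -
  obtain X0 where X: "X = add_mset (F (Disj A B)) X0" using assms by (metis mset_add)
  have "Disj A B \<in> C" using forms_X_C X by simp
  then have AB: "A \<in> C" "B \<in> C" using fl_closedD[OF fl_closed_C] by blast+
  have unprov: "\<not> prov (fill G (add_mset (F A) (add_mset (F B) X0)))"
    using unprovable prov_disj_in[of G A B X0] X by blast
  show ?thesis
  proof (rule countermodel_reduce[OF _ _ _ _ unprov])
    show "dias X \<subseteq> dias (add_mset (F A) (add_mset (F B) X0))"
      "brackets (add_mset (F A) (add_mset (F B) X0)) = brackets X"
      "weight (add_mset (F A) (add_mset (F B) X0)) < weight X"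
      "forms (add_mset (F A) (add_mset (F B) X0)) \<subseteq> C"
      using X AB forms_X_C by (auto simp: dias_def)
    show "falsifies t X" if "falsifies t (add_mset (F A) (add_mset (F B) X0))" for t
      using that X by auto
  qed
qed

lemma bracket_countermodel:
  assumes "Br Y \<in># X"
  shows "\<exists>t. falsifies t Y \<and> (\<forall>A\<in>ancestor_dias G \<union> dias X. \<not> sat t A \<and> \<not> sat t (Dia A))"
proof -
  obtain X0 where X: "X = add_mset (Br Y) X0" using assms by (metis mset_add)
  let ?G = "ctx_comp G (Nest X0 (Hole {#}))"
  have fill_G: "fill ?G Y = fill G X" using X by simp
  have anc: "ancestor_dias ?G = ancestor_dias G \<union> dias X" using X hole_seq_G by simp
  have "has_countermodel C ?G Y (ancestor_dias ?G)"
    by (rule smaller_brackets) (use X anc in \<open>auto simp: brackets_def\<close>)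
  then obtain t where "countermodel ?G Y (ancestor_dias ?G) t"
    using fill_G forms_C unprovable by (auto simp: has_countermodel_def)
  then show ?thesis unfolding anc countermodel_def by blast
qed

lemma box_countermodel:
  assumes "F (Bx A) \<in># X"
  shows "\<exists>t. \<not> sat t A \<and> (\<forall>B\<in>ancestor_dias G \<union> dias X. \<not> sat t B \<and> \<not> sat t (Dia B))"
proof -
  obtain X0 where X: "X = add_mset (F (Bx A)) X0" using assms by (metis mset_add)
  let ?K = "{#F (Dia (neg A)), F A#}"
  let ?G = "ctx_comp G (Nest X0 (Hole {#}))"
  have fill_G: "fill ?G ?K = fill G (add_mset (Br ?K) X0)" by simp
  have anc: "ancestor_dias ?G = ancestor_dias G \<union> dias X" using X hole_seq_G by simp
  have unprov: "\<not> prov (fill ?G ?K)"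
    unfolding fill_G using unprovable prov_box_in[of G A X0] X by blast
  have "Bx A \<in> C" using forms_X_C X by simp
  then have AC: "A \<in> C" "Dia (neg A) \<in> C" "neg A \<in> C"
    using fl_closedD[OF fl_closed_C] by blast+
  have forms: "forms (fill ?G ?K) \<subseteq> C"
    using fill_G forms_ctx_C forms_X_C AC X forms_fill[of G "add_mset (Br ?K) X0"] by auto
  have "neg A \<notin> ancestor_dias G \<union> dias X"
    using prov_box_loop[OF assms] unprovable by blast
  with AC anc have "C - (ancestor_dias ?G \<union> dias ?K) \<subset> C - (ancestor_dias G \<union> dias X)"
    by (auto simp: dias_def)
  then have "has_countermodel C ?G ?K (ancestor_dias ?G)"
    using finite_C by (intro smaller_first psubset_card_mono) auto
  then obtain t where "countermodel ?G ?K (ancestor_dias ?G) t"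
    using forms unprov by (auto simp: has_countermodel_def)
  then show ?thesis unfolding anc countermodel_def by auto
qed

lemma countermodel_saturated:
  assumes "T = {}" and "\<And>A B. F (Conj A B) \<notin># X" and "\<And>A B. F (Disj A B) \<notin># X"
  shows "\<exists>t. countermodel G X T t"
proof -
  have "F (NAt p) \<notin># X" if "F (At p) \<in># X" for p
  proof
    assume "F (NAt p) \<in># X"
    then obtain X1 where X: "X = add_mset (F (NAt p)) X1" by (metis mset_add)
    with that have "F (At p) \<in># X1" by simp
    then obtain X0 where "X1 = add_mset (F (At p)) X0" by (metis mset_add)
    with X unprovable prov_ax_in show False by metis
  qed
  then obtain t where "falsifies t X" "\<forall>A\<in>ancestor_dias G \<union> dias X. \<not> sat t (Dia A)"
    using tree_countermodel[OF _ assms(2,3) _ bracket_countermodel box_countermodel] by blast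
  with assms(1) show ?thesis by (auto simp: countermodel_def)
qed

lemma countermodel_exists: "\<exists>t. countermodel G X T t"
proof (cases "T = {}")
  case False
  then show ?thesis using countermodel_pending by blast
next
  case True
  then show ?thesis
    using countermodel_conj countermodel_disj countermodel_saturated[OF True] by metis
qed

end

lemma has_countermodel_if_fl_closed:
  assumes "finite C" and "fl_closed C"
  shows "has_countermodel C G X T"
proof -
  have "has_countermodel C (fst p) (fst (snd p)) (snd (snd p))" for p
    using wf_measures[of "search_measure C"]
  proof (induction p rule: wf_induct_rule)
    case (less p)
    obtain G X T where p: "p = (G, X, T)" by (cases p)
    show ?case
      unfolding p has_countermodel_def fst_conv snd_conv
    proof (intro impI, elim conjE)
      assume "hole_seq G = {#}" "forms (fill G X) \<subseteq> C" "T \<subseteq> ancestor_dias G" "\<not> prov (fill G X)"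
      moreover have "has_countermodel C G' X' T'"
        if "((G', X', T'), (G, X, T)) \<in> measures (search_measure C)" for G' X' T'
        using less.IH[of "(G', X', T')"] that by (simp add: p)
      ultimately interpret search_step C G X T
        using assms by unfold_locales
      show "\<exists>t. countermodel G X T t" by (rule countermodel_exists)
    qed
  qed
  from this[of "(G, X, T)"] show ?thesis by simp
qed

lemma prov_complete: "\<not> prov S \<Longrightarrow> \<exists>t. falsifies t S"
proof -
  assume unprov: "\<not> prov S"
  define C where "C = (\<Union>A\<in>forms S. fl_closure A)"
  have "finite C" by (simp add: C_def finite_forms finite_fl_closure)
  moreover have "fl_closed C" unfolding C_def by (intro fl_closed_UN fl_closed_fl_closure)
  ultimately have "has_countermodel C (Hole {#}) S {}" by (rule has_countermodel_if_fl_closed)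
  moreover have "forms S \<subseteq> C" using fl_closure_refl by (auto simp: C_def)
  ultimately show ?thesis using unprov by (auto simp: has_countermodel_def countermodel_def)
qed

theorem mainTheorem11:
  fixes G :: ctx and A :: form
  assumes "prov (fill G {# F A #})"
      and "prov (fill G {# F (neg A) #})"
  shows "prov (fill G {#})"
proof (rule ccontr)
  assume "\<not> prov (fill G {#})"
  then obtain t where "falsifies t (fill G {#})" using prov_complete by blast
  then obtain s where s: "\<forall>Y. falsifies s Y \<longrightarrow> falsifies t (fill G Y)"
    using falsifies_fill_point by blast
  have "falsifies s {#F A#} \<or> falsifies s {#F (neg A)#}" by auto
  with s assms show False using prov_sound by blast
qed

end
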